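(* Let $G$ be a finite group of order $9$ (written additively), and let $A,B\subseteq G$. Then: (i) if $|A|=3$ and $A$ is zero-sum free, then $|\sum(A)|\ge 6$; (ii) if $|A|=3$ and $0\notin A$, then $|\sum(A)|\ge 5$; (iii) if $|A|=4$ and $0\notin A$, then $|\sum(A)|\ge 7$; (iv) if $|A|=4$, then $|\sum_2(A)|\ge 5$; (v) if $|A|=4$ and $|B|\ge 2$, then $|A+B|\ge 5$.
   Context: For a subset $A=\{a_1,\dots,a_k\}$ of $G$, $\sum(A)$ is the set of all sums $a_{i_1}+\cdots+a_{i_l}$ with $1\le l\le k$ and $i_1,\dots,i_l$ pairwise distinct; $\sum_r(A)$ is the set of all such sums with exactly $r$ pairwise distinct indices. $A$ is zero-sum free if $0\notin\sum(A)$. $A+B=\{a+b: a\in A, b\in B\}$. *)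

theory Defs
  imports Main
begin

definition subsums :: "'a::comm_monoid_add set \<Rightarrow> 'a set" where
  "subsums A = {\<Sum>S | S. S \<subseteq> A \<and> S \<noteq> {}}"

definition subsums_r :: "nat \<Rightarrow> 'a::comm_monoid_add set \<Rightarrow> 'a set" where
  "subsums_r r A = {\<Sum>S | S. S \<subseteq> A \<and> card S = r}"

definition zero_sum_free :: "'a::comm_monoid_add set \<Rightarrow> bool" where
  "zero_sum_free A \<longleftrightarrow> 0 \<notin> subsums A"

definition sumset :: "'a::plus set \<Rightarrow> 'a set \<Rightarrow> 'a set" where
  "sumset A B = {a + b | a b. a \<in> A \<and> b \<in> B}"

end

(* A finite set U of an abelian group that is invariant under translation by d satisfies |U| d = 0
   (compare the sums of U and of U + d). In a group of order 9, n d = 0 with 3 not dividing n forces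
   d = 0, so no set of size 4, 7 or 8 is translation invariant; this gives (v), and applied to
   {0} \<union> \<Sigma>(A') for a zero-sum-free triple A' of A it gives (iii).
   For a triple B the pair sums are \<Sigma>B - x (x \<in> B); with c \<notin> B, an overlap c + y = \<Sigma>B - x
   forces y = x and 2x = \<Sigma>B - c, which has at most one solution because doubling is injective
   in a group of odd order. Counting this overlap gives (i), (ii) and (iv).
   If A in (iii) has no zero-sum-free triple, then A = {x, -x, y, -y}, and seven distinct subset
   sums are exhibited directly. *)

theory Submission
  imports Defs "HOL-Library.Cardinality"
begin

section \<open>Multiples and translation-invariant sets\<close>

fun nsmul :: "nat \<Rightarrow> 'a::monoid_add \<Rightarrow> 'a" where
  "nsmul 0 a = 0"
| "nsmul (Suc n) a = a + nsmul n a"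

lemma nsmul_zero [simp]: "nsmul n 0 = 0"
  by (induction n) simp_all

lemma nsmul_add: "nsmul (m + n) a = nsmul m a + nsmul n a"
  by (induction m) (simp_all add: add.assoc)

lemma nsmul_mult: "nsmul (m * n) a = nsmul m (nsmul n a)"
  by (induction m) (simp_all add: nsmul_add)

lemma sum_constant_nsmul: "finite S \<Longrightarrow> (\<Sum>_\<in>S. a) = nsmul (card S) a"
  by (induction S rule: finite_induct) simp_all

lemma nsmul_card_eq_0_if_translation_invariant:
  fixes U :: "'a::ab_group_add set"
  assumes "finite U" and "(\<lambda>x. x + d) ` U \<subseteq> U"
  shows "nsmul (card U) d = 0"
proof -
  have inj: "inj_on (\<lambda>x. x + d) U"
    by (simp add: inj_on_def)
  then have "(\<lambda>x. x + d) ` U = U"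
    using assms by (simp add: card_subset_eq card_image)
  then have "\<Sum>U = (\<Sum>x\<in>U. x + d)"
    using sum.reindex[OF inj, of "\<lambda>x. x"] by simp
  also have "\<dots> = \<Sum>U + nsmul (card U) d"
    by (simp add: sum.distrib sum_constant_nsmul assms(1))
  finally show ?thesis
    by simp
qed

lemma nsmul_CARD_eq_0: "nsmul CARD('a) (a::'a::{ab_group_add,finite}) = 0"
  using nsmul_card_eq_0_if_translation_invariant[of UNIV a] by simp

lemma eq_0_if_nsmul_eq_0_coprime_CARD:
  fixes a :: "'a::{ab_group_add,finite}"
  assumes "coprime n CARD('a)" and "nsmul n a = 0"
  shows "a = 0"
proof (cases "n = 0")
  case True
  then have "CARD('a) = 1"
    using assms(1) by simp
  then obtain c :: 'a where "UNIV = {c}"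
    by (rule card_1_singletonE)
  then show ?thesis
    by (metis UNIV_I singletonD)
next
  case False
  obtain x y where "n * x = CARD('a) * y + 1"
    using bezout_nat[OF False, of "CARD('a)"] assms(1) by (auto simp: coprime_iff_gcd_eq_1)
  then have "nsmul (x * n) a = nsmul (y * CARD('a) + 1) a"
    by (simp add: mult.commute)
  then show ?thesis
    using assms(2) by (simp add: nsmul_mult nsmul_add nsmul_CARD_eq_0)
qed

lemma double_eq_0_odd_CARD:
  fixes x :: "'a::{ab_group_add,finite}"
  assumes "odd CARD('a)" and "x + x = 0"
  shows "x = 0"
proof -
  have "nsmul 2 x = 0"
    using assms(2) by (simp add: numeral_2_eq_2)
  then show ?thesis
    using eq_0_if_nsmul_eq_0_coprime_CARD[of 2 x] assms(1) by simp
qed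

lemma double_inj_odd_CARD:
  fixes x y :: "'a::{ab_group_add,finite}"
  assumes "odd CARD('a)" and "x + x = y + y"
  shows "x = y"
  using double_eq_0_odd_CARD[of "x - y"] assms by (simp add: algebra_simps)

lemma card_less_card_Un_translate:
  fixes U :: "'a::{ab_group_add,finite} set"
  assumes "coprime (card U) CARD('a)" and "d \<noteq> 0"
  shows "card U < card (U \<union> (\<lambda>x. x + d) ` U)"
proof -
  have "\<not> (\<lambda>x. x + d) ` U \<subseteq> U"
  proof
    assume "(\<lambda>x. x + d) ` U \<subseteq> U"
    then have "nsmul (card U) d = 0"
      by (simp add: nsmul_card_eq_0_if_translation_invariant)
    then show False
      using eq_0_if_nsmul_eq_0_coprime_CARD assms by blast
  qed
  then have "U \<subset> U \<union> (\<lambda>x. x + d) ` U"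
    by blast
  then show ?thesis
    by (simp add: psubset_card_mono)
qed

lemma card_less_card_sumset:
  fixes A B :: "'a::{ab_group_add,finite} set"
  assumes "coprime (card A) CARD('a)" and "2 \<le> card B"
  shows "card A < card (sumset A B)"
proof -
  obtain b1 b2 where b: "b1 \<in> B" "b2 \<in> B" "b1 \<noteq> b2"
    using assms(2) card_le_Suc0_iff_eq[of B] by force
  let ?A1 = "(\<lambda>x. x + b1) ` A"
  have "card ?A1 = card A"
    by (simp add: card_image inj_on_def)
  moreover have "(\<lambda>x. x + (b2 - b1)) ` ?A1 = (\<lambda>x. x + b2) ` A"
    by (simp add: image_image)
  moreover have "?A1 \<union> (\<lambda>x. x + b2) ` A \<subseteq> sumset A B"
    using b unfolding sumset_def by blast
  ultimately show ?thesis
    using card_less_card_Un_translate[of ?A1 "b2 - b1"] assms(1) b(3)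
    by (metis card_mono finite order_less_le_trans right_minus_eq)
qed

section \<open>Subset sums\<close>

lemma subsums_empty [simp]: "subsums {} = {}"
  unfolding subsums_def by blast

lemma subsums_mono: "A \<subseteq> B \<Longrightarrow> subsums A \<subseteq> subsums B"
  unfolding subsums_def by blast

lemma subset_subsums: "A \<subseteq> subsums A"
proof
  fix x
  assume "x \<in> A"
  then have "x = \<Sum>{x} \<and> {x} \<subseteq> A \<and> {x} \<noteq> {}"
    by simp
  then show "x \<in> subsums A"
    unfolding subsums_def by blast
qed

lemma sum_in_subsums: "A \<noteq> {} \<Longrightarrow> \<Sum>A \<in> subsums A"
  unfolding subsums_def by blast

lemma subsums_r_subset_subsums: "0 < r \<Longrightarrow> subsums_r r A \<subseteq> subsums A"
  unfolding subsums_def subsums_r_def by fastforce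

lemma subsums_r_mono: "A \<subseteq> B \<Longrightarrow> subsums_r r A \<subseteq> subsums_r r B"
  unfolding subsums_r_def by blast

lemma add_in_subsums_r_2: "x \<in> A \<Longrightarrow> y \<in> A \<Longrightarrow> x \<noteq> y \<Longrightarrow> x + y \<in> subsums_r 2 A"
proof -
  assume "x \<in> A" "y \<in> A" "x \<noteq> y"
  then have "x + y = \<Sum>{x, y} \<and> {x, y} \<subseteq> A \<and> card {x, y} = 2"
    by simp
  then show ?thesis
    unfolding subsums_r_def by blast
qed

lemma subsums_r_card_minus_1:
  fixes B :: "'a::ab_group_add set"
  assumes "finite B" and "B \<noteq> {}"
  shows "subsums_r (card B - 1) B = (\<lambda>x. \<Sum>B - x) ` B"
proof
  show "subsums_r (card B - 1) B \<subseteq> (\<lambda>x. \<Sum>B - x) ` B"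
  proof
    fix s
    assume "s \<in> subsums_r (card B - 1) B"
    then obtain S where S: "s = \<Sum>S" "S \<subseteq> B" "card S = card B - 1"
      unfolding subsums_r_def by blast
    have "0 < card B"
      using assms by (simp add: card_gt_0_iff)
    then have "card (B - S) = 1"
      using S(2,3) assms(1) by (simp add: card_Diff_subset finite_subset)
    then obtain x where "B - S = {x}"
      by (rule card_1_singletonE)
    then have "S = B - {x}" and "x \<in> B"
      using S(2) by auto
    then show "s \<in> (\<lambda>x. \<Sum>B - x) ` B"
      using S(1) assms(1) by (simp add: sum_diff1)
  qed
  show "(\<lambda>x. \<Sum>B - x) ` B \<subseteq> subsums_r (card B - 1) B"
  proof
    fix s
    assume "s \<in> (\<lambda>x. \<Sum>B - x) ` B"
    then obtain x where "x \<in> B" and "s = \<Sum>B - x"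
      by blast
    then have "s = \<Sum>(B - {x}) \<and> B - {x} \<subseteq> B \<and> card (B - {x}) = card B - 1"
      using assms(1) by (simp add: sum_diff1)
    then show "s \<in> subsums_r (card B - 1) B"
      unfolding subsums_r_def by blast
  qed
qed

lemma subsums_insert:
  fixes A :: "'a::comm_monoid_add set"
  assumes "finite A" and "x \<notin> A"
  shows "subsums (insert x A) = subsums A \<union> {x} \<union> (+) x ` subsums A"
proof (intro set_eqI iffI)
  have sum_insert: "\<Sum>(insert x T) = x + \<Sum>T" if "T \<subseteq> A" for T
    using that assms by (meson finite_subset subsetD sum.insert)
  fix s
  show "s \<in> subsums A \<union> {x} \<union> (+) x ` subsums A" if s: "s \<in> subsums (insert x A)"
  proof -
    obtain S where S: "s = \<Sum>S" "S \<subseteq> insert x A" "S \<noteq> {}"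
      using s unfolding subsums_def by blast
    show ?thesis
    proof (cases "x \<in> S")
      case True
      then have "S = insert x (S - {x})" and T: "S - {x} \<subseteq> A"
        using S(2) by auto
      then have "s = x + \<Sum>(S - {x})"
        using S(1) sum_insert by metis
      then show ?thesis
        using T sum_in_subsums[of "S - {x}"] subsums_mono[OF T] by (cases "S - {x} = {}") auto
    next
      case False
      then have "S \<subseteq> A"
        using S(2) by blast
      then show ?thesis
        using S unfolding subsums_def by blast
    qed
  qed
  show "s \<in> subsums (insert x A)" if "s \<in> subsums A \<union> {x} \<union> (+) x ` subsums A"
    using that
  proof (elim UnE)
    assume "s \<in> subsums A"
    then show ?thesis
      using subsums_mono[of A "insert x A"] by blast
  next
    assume "s \<in> {x}"
    then show ?thesis
      using subset_subsums by blast
  next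
    assume "s \<in> (+) x ` subsums A"
    then obtain T where "s = x + \<Sum>T" "T \<subseteq> A" "T \<noteq> {}"
      unfolding subsums_def by blast
    then have "s = \<Sum>(insert x T) \<and> insert x T \<subseteq> insert x A \<and> insert x T \<noteq> {}"
      using sum_insert by auto
    then show ?thesis
      unfolding subsums_def by blast
  qed
qed

lemma sum_neq_if_zero_sum_free:
  fixes A :: "'a::cancel_comm_monoid_add set"
  assumes "zero_sum_free A" and "finite T" and "S \<subset> T" and "T \<subseteq> A"
  shows "\<Sum>S \<noteq> \<Sum>T"
proof
  assume "\<Sum>S = \<Sum>T"
  moreover have "\<Sum>T = \<Sum>(T - S) + \<Sum>S"
    using assms(2,3) by (simp add: sum.subset_diff)
  moreover have "\<Sum>(T - S) \<in> subsums A"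
    using assms(3,4) unfolding subsums_def by blast
  ultimately show False
    using assms(1) unfolding zero_sum_free_def by simp
qed

lemma eq_if_add_eq_sum_minus_card_3:
  fixes B :: "'a::ab_group_add set"
  assumes "card B = 3" and "c \<notin> B" and "x \<in> B" and "y \<in> B" and "c + y = \<Sum>B - x"
  shows "y = x"
proof (rule ccontr)
  assume "y \<noteq> x"
  then have "card (B - {x, y}) = 1"
    using assms(1,3,4) by (simp add: card_Diff_subset)
  then obtain z where "B - {x, y} = {z}"
    by (rule card_1_singletonE)
  then have B: "B = {x, y, z}" "z \<noteq> x" "z \<noteq> y"
    using assms(3,4) by auto
  then have "c + y = y + z"
    using assms(5) \<open>y \<noteq> x\<close> by (simp add: algebra_simps)
  then show False
    using assms(2) B(1) by (simp add: add.commute)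
qed

lemma card_translate_Int_subsums_r_2_le_1:
  fixes B :: "'a::{ab_group_add,finite} set"
  assumes "odd CARD('a)" and "card B = 3" and "c \<notin> B"
  shows "card ((+) c ` B \<inter> subsums_r 2 B) \<le> 1"
proof -
  have P: "subsums_r 2 B = (\<lambda>x. \<Sum>B - x) ` B"
    using subsums_r_card_minus_1[of B] assms(2) by force
  have "(+) c ` B \<inter> subsums_r 2 B \<subseteq> (+) c ` {x \<in> B. x + x = \<Sum>B - c}"
  proof
    fix s
    assume "s \<in> (+) c ` B \<inter> subsums_r 2 B"
    then obtain x y where xy: "x \<in> B" "y \<in> B" "s = c + y" "s = \<Sum>B - x"
      unfolding P by blast
    then have "y = x"
      using eq_if_add_eq_sum_minus_card_3 assms(2,3) by metis
    then show "s \<in> (+) c ` {x \<in> B. x + x = \<Sum>B - c}"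
      using xy by (auto simp: algebra_simps)
  qed
  then have "card ((+) c ` B \<inter> subsums_r 2 B) \<le> card ((+) c ` {x \<in> B. x + x = \<Sum>B - c})"
    by (intro card_mono) simp_all
  also have "\<dots> \<le> card {x \<in> B. x + x = \<Sum>B - c}"
    by (rule card_image_le) simp
  also have "\<dots> \<le> card {\<Sum>B - c}"
  proof (rule card_inj_on_le)
    show "inj_on (\<lambda>x. x + x) {x \<in> B. x + x = \<Sum>B - c}"
      by (rule inj_onI) (auto intro: double_inj_odd_CARD[OF assms(1)])
  qed auto
  finally show ?thesis
    by simp
qed

lemma card_translate_Un_subsums_r_2_ge_5:
  fixes B :: "'a::{ab_group_add,finite} set"
  assumes "odd CARD('a)" and "card B = 3" and "c \<notin> B"
  shows "5 \<le> card ((+) c ` B \<union> subsums_r 2 B)"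
proof -
  have "card ((+) c ` B) = 3" and "card (subsums_r 2 B) = 3"
    using subsums_r_card_minus_1[of B] assms(2) by (force simp: card_image inj_on_def)+
  then show ?thesis
    using card_Un_Int[of "(+) c ` B" "subsums_r 2 B"] card_translate_Int_subsums_r_2_le_1[OF assms]
    by simp
qed

lemma card_subsums_ge_5_card_3:
  fixes A :: "'a::{ab_group_add,finite} set"
  assumes "odd CARD('a)" and "card A = 3" and "0 \<notin> A"
  shows "5 \<le> card (subsums A)"
proof -
  have "5 \<le> card (A \<union> subsums_r 2 A)"
    using card_translate_Un_subsums_r_2_ge_5[OF assms] by simp
  also have "\<dots> \<le> card (subsums A)"
    using subset_subsums subsums_r_subset_subsums[of 2 A] by (intro card_mono) auto
  finally show ?thesis .
qed

lemma card_subsums_ge_6_card_3_zero_sum_free: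
  fixes A :: "'a::{ab_group_add,finite} set"
  assumes "odd CARD('a)" and "card A = 3" and "zero_sum_free A"
  shows "6 \<le> card (subsums A)"
proof -
  have "0 \<notin> A"
    using assms(3) subset_subsums unfolding zero_sum_free_def by blast
  have proper_sums: "\<Sum>S \<noteq> \<Sum>A" if "S \<subseteq> A" "card S < 3" for S
    using that assms(2) by (intro sum_neq_if_zero_sum_free[OF assms(3)]) auto
  have "\<Sum>A \<notin> A"
  proof
    assume "\<Sum>A \<in> A"
    then show False
      using proper_sums[of "{\<Sum>A}"] by simp
  qed
  moreover have "\<Sum>A \<notin> subsums_r 2 A"
  proof
    assume "\<Sum>A \<in> subsums_r 2 A"
    then obtain S where "\<Sum>A = \<Sum>S" "S \<subseteq> A" "card S = 2"
      unfolding subsums_r_def by blast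
    then show False
      using proper_sums[of S] by simp
  qed
  ultimately have "6 \<le> card (insert (\<Sum>A) (A \<union> subsums_r 2 A))"
    using card_translate_Un_subsums_r_2_ge_5[OF assms(1,2) \<open>0 \<notin> A\<close>] by simp
  also have "\<dots> \<le> card (subsums A)"
  proof (rule card_mono)
    have "A \<noteq> {}"
      using assms(2) by auto
    then show "insert (\<Sum>A) (A \<union> subsums_r 2 A) \<subseteq> subsums A"
      using subset_subsums subsums_r_subset_subsums[of 2 A] sum_in_subsums[of A] by auto
  qed simp
  finally show ?thesis .
qed

lemma card_subsums_r_2_ge_5_card_4:
  fixes A :: "'a::{ab_group_add,finite} set"
  assumes "odd CARD('a)" and "card A = 4"
  shows "5 \<le> card (subsums_r 2 A)"
proof -
  obtain a B where A: "A = insert a B" "a \<notin> B" "card B = 3"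
    using assms(2) card_Suc_eq[of A 3] by auto
  have "5 \<le> card ((+) a ` B \<union> subsums_r 2 B)"
    using card_translate_Un_subsums_r_2_ge_5[OF assms(1) A(3,2)] .
  also have "\<dots> \<le> card (subsums_r 2 A)"
    using A add_in_subsums_r_2[of a A] subsums_r_mono[of B A 2] by (intro card_mono) (simp, blast)
  finally show ?thesis .
qed

lemma card_insert_inverse_pair:
  fixes z :: "'a::ab_group_add"
  assumes "finite F" and "z + z \<noteq> 0" and "z \<notin> F" and "-z \<notin> F"
  shows "card (insert z (insert (-z) F)) = card F + 2"
proof -
  have "z \<noteq> -z"
    using assms(2) by (simp add: eq_neg_iff_add_eq_0)
  then show ?thesis
    using assms(1,3,4) by simp
qed

lemma card_subsums_inverse_pairs_ge_7_odd:
  fixes x y :: "'a::{ab_group_add,finite}"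
  assumes odd: "odd CARD('a)"
    and "x \<noteq> 0" and "y \<noteq> 0" and "y \<noteq> x" and "y \<noteq> -x"
    and "x + x + y \<noteq> 0" and "x + y + y \<noteq> 0"
  shows "7 \<le> card (subsums {x, -x, y, -y})"
proof -
  let ?A = "{x, -x, y, -y}"
  have double_neq_0: "v + v \<noteq> 0" if "v \<noteq> 0" for v :: 'a
    using double_eq_0_odd_CARD[OF odd] that by blast
  have "card {x, -x, 0} = 3"
    using card_insert_inverse_pair[of "{0}" x] double_neq_0 assms(2) by simp
  moreover have "y \<notin> {x, -x, 0}" and "-y \<notin> {x, -x, 0}"
    using assms(3-5) by (auto simp: minus_equation_iff)
  ultimately have "card {y, -y, x, -x, 0} = 5"
    using card_insert_inverse_pair[of "{x, -x, 0}" y] double_neq_0 assms(3) by simp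
  moreover have "x + y \<notin> {y, -y, x, -x, 0}" and "-(x + y) \<notin> {y, -y, x, -x, 0}"
    using assms(2-7) by (auto simp: algebra_simps eq_neg_iff_add_eq_0 neg_eq_iff_add_eq_0)
  ultimately have "7 = card {x + y, -(x + y), y, -y, x, -x, 0}"
    using card_insert_inverse_pair[of "{y, -y, x, -x, 0}" "x + y"] double_neq_0 assms(5)
    by (simp add: neg_eq_iff_add_eq_0)
  also have "\<dots> \<le> card (subsums ?A)"
  proof (rule card_mono)
    have "x \<noteq> -x"
      using double_neq_0[OF assms(2)] by (simp add: eq_neg_iff_add_eq_0)
    then have "x + -x \<in> subsums_r 2 ?A" and "x + y \<in> subsums_r 2 ?A"
      and "-x + -y \<in> subsums_r 2 ?A"
      using assms(4) by (intro add_in_subsums_r_2; simp)+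
    then show "{x + y, -(x + y), y, -y, x, -x, 0} \<subseteq> subsums ?A"
      using subset_subsums[of ?A] subsums_r_subset_subsums[of 2 ?A] by auto
  qed simp
  finally show ?thesis
    by simp
qed

lemma subsums_3:
  fixes a b c :: "'a::comm_monoid_add"
  assumes "a \<noteq> b" and "a \<noteq> c" and "b \<noteq> c"
  shows "subsums {a, b, c} = {a, b, c, a + b, a + c, b + c, a + b + c}"
  using assms by (auto simp: subsums_insert add.assoc)

lemma zero_sum_of_not_zero_sum_free_3:
  fixes a b c :: "'a::comm_monoid_add"
  assumes "a \<noteq> b" and "a \<noteq> c" and "b \<noteq> c" and "0 \<notin> {a, b, c}"
    and "\<not> zero_sum_free {a, b, c}"
  shows "a + b = 0 \<or> a + c = 0 \<or> b + c = 0 \<or> a + b + c = 0"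
  using assms by (auto simp: zero_sum_free_def subsums_3)

lemma inverse_pairs_if_zero_sums_of_triples:
  fixes a b c d :: "'a::ab_group_add"
  assumes "a \<noteq> b" "a \<noteq> c" "a \<noteq> d" "b \<noteq> c" "b \<noteq> d" "c \<noteq> d"
    and "a + b = 0 \<or> a + c = 0 \<or> b + c = 0 \<or> a + b + c = 0"
    and "a + b = 0 \<or> a + d = 0 \<or> b + d = 0 \<or> a + b + d = 0"
    and "a + c = 0 \<or> a + d = 0 \<or> c + d = 0 \<or> a + c + d = 0"
    and "b + c = 0 \<or> b + d = 0 \<or> c + d = 0 \<or> b + c + d = 0"
  shows "\<exists>x y. {a, b, c, d} = {x, -x, y, -y}"
proof -
  \<comment> \<open>Two zero-sum triples share two elements, so their third elements coincide; likewise for two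
    zero-sum pairs sharing an element.\<close>
  have triples: "a + b + c = 0 \<Longrightarrow> a + b + d \<noteq> 0" "a + b + c = 0 \<Longrightarrow> a + c + d \<noteq> 0"
    "a + b + c = 0 \<Longrightarrow> b + c + d \<noteq> 0" "a + b + d = 0 \<Longrightarrow> a + c + d \<noteq> 0"
    "a + b + d = 0 \<Longrightarrow> b + c + d \<noteq> 0" "a + c + d = 0 \<Longrightarrow> b + c + d \<noteq> 0"
    using assms(1-6) by (metis add_right_cancel add_left_cancel add.commute add.assoc)+
  have pairs: "a + b = 0 \<Longrightarrow> a + c \<noteq> 0" "a + b = 0 \<Longrightarrow> a + d \<noteq> 0" "a + c = 0 \<Longrightarrow> a + d \<noteq> 0"
    "a + b = 0 \<Longrightarrow> b + c \<noteq> 0" "a + b = 0 \<Longrightarrow> b + d \<noteq> 0" "b + c = 0 \<Longrightarrow> b + d \<noteq> 0"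
    "a + c = 0 \<Longrightarrow> b + c \<noteq> 0" "a + c = 0 \<Longrightarrow> c + d \<noteq> 0" "b + c = 0 \<Longrightarrow> c + d \<noteq> 0"
    "a + d = 0 \<Longrightarrow> b + d \<noteq> 0" "a + d = 0 \<Longrightarrow> c + d \<noteq> 0" "b + d = 0 \<Longrightarrow> c + d \<noteq> 0"
    using assms(1-6) by (metis add_right_cancel add_left_cancel add.commute)+
  have "(a + b = 0 \<and> c + d = 0) \<or> (a + c = 0 \<and> b + d = 0) \<or> (a + d = 0 \<and> b + c = 0)"
    using assms(7-10) triples pairs by blast
  then show ?thesis
  proof (elim disjE conjE)
    assume "a + b = 0" and "c + d = 0"
    then have "{a, b, c, d} = {a, -a, c, -c}"
      by (simp add: add_eq_0_iff)
    then show ?thesis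
      by blast
  next
    assume "a + c = 0" and "b + d = 0"
    then have "{a, b, c, d} = {a, -a, b, -b}"
      by (auto simp: add_eq_0_iff)
    then show ?thesis
      by blast
  next
    assume "a + d = 0" and "b + c = 0"
    then have "{a, b, c, d} = {a, -a, b, -b}"
      by (auto simp: add_eq_0_iff)
    then show ?thesis
      by blast
  qed
qed

lemma zero_sum_free_triple_or_inverse_pairs:
  fixes A :: "'a::ab_group_add set"
  assumes "card A = 4" and "0 \<notin> A"
  shows "(\<exists>d\<in>A. zero_sum_free (A - {d})) \<or> (\<exists>x y. A = {x, -x, y, -y})"
proof (cases "\<exists>d\<in>A. zero_sum_free (A - {d})")
  case no_triple: False
  obtain a B where "A = insert a B" "a \<notin> B" "card B = 3"
    using assms(1) card_Suc_eq[of A 3] by auto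
  then obtain b c d where A: "A = {a, b, c, d}"
    and distinct: "a \<noteq> b" "a \<noteq> c" "a \<noteq> d" "b \<noteq> c" "b \<noteq> d" "c \<noteq> d"
    using card_3_iff[of B] by auto
  have "A - {d} = {a, b, c}" "A - {c} = {a, b, d}" "A - {b} = {a, c, d}" "A - {a} = {b, c, d}"
    using A distinct by auto
  then have "\<not> zero_sum_free {a, b, c}" "\<not> zero_sum_free {a, b, d}"
    "\<not> zero_sum_free {a, c, d}" "\<not> zero_sum_free {b, c, d}"
    using no_triple A by (metis insertCI)+
  then show ?thesis
    using assms(2) distinct unfolding A
    by (intro disjI2 inverse_pairs_if_zero_sums_of_triples zero_sum_of_not_zero_sum_free_3) auto
qed simp

section \<open>Groups of order 9\<close>

lemma card_subsums_inverse_pairs_ge_7: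
  fixes x y :: "'a::{ab_group_add,finite}"
  assumes nine: "CARD('a) = 9" and "x \<noteq> 0" and "y \<noteq> 0" and "y \<noteq> x" and "y \<noteq> -x"
  shows "7 \<le> card (subsums {x, -x, y, -y})"
proof (cases "x + x + y \<noteq> 0 \<and> x + y + y \<noteq> 0")
  case True
  then show ?thesis
    using card_subsums_inverse_pairs_ge_7_odd[of x y] assms by simp
next
  case False
  have coprime_4: "coprime (4::nat) CARD('a)" and coprime_5: "coprime (5::nat) CARD('a)"
    unfolding nine by code_simp+
  have four: "v = 0" if "v + v + (v + v) = 0" for v :: 'a
    using eq_0_if_nsmul_eq_0_coprime_CARD[OF coprime_4, of v] that
    by (simp add: numeral_eq_Suc add.assoc)
  have five: "v = 0" if "v + v + (v + v) + v = 0" for v :: 'a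
    using eq_0_if_nsmul_eq_0_coprime_CARD[OF coprime_5, of v] that
    by (simp add: numeral_eq_Suc add.assoc)
  \<comment> \<open>The failing conditions for \<open>y\<close> and for \<open>-y\<close> together force an element of order 4 or 5.\<close>
  have "x + x + -y \<noteq> 0" and "x + -y + -y \<noteq> 0"
    using False four[of x] five[of x] four[of y] five[of y] assms(2,3)
    by (auto simp: algebra_simps neg_eq_iff_add_eq_0)
  moreover have "{x, -x, -y, - (-y)} = {x, -x, y, -y}"
    by auto
  ultimately show ?thesis
    using card_subsums_inverse_pairs_ge_7_odd[of x "-y"] assms by (auto simp: minus_equation_iff)
qed

lemma card_subsums_insert_ge_7:
  fixes A :: "'a::{ab_group_add,finite} set"
  assumes nine: "CARD('a) = 9" and "card A = 3" and "zero_sum_free A" and "d \<notin> A" and "d \<noteq> 0"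
  shows "7 \<le> card (subsums (insert d A))"
proof -
  let ?U = "insert 0 (subsums A)"
  let ?V = "?U \<union> (\<lambda>s. s + d) ` ?U"
  have "6 \<le> card (subsums A)"
    using card_subsums_ge_6_card_3_zero_sum_free[of A] assms(2,3) nine by simp
  moreover have "0 \<notin> subsums A"
    using assms(3) unfolding zero_sum_free_def .
  ultimately have U: "7 \<le> card ?U"
    by simp
  have "8 \<le> card ?V"
  proof (cases "card ?U = 9")
    case True
    have "card ?U \<le> card ?V"
      by (intro card_mono) auto
    then show ?thesis
      using True by simp
  next
    case False
    have "card ?U \<le> 9"
      using card_mono[of UNIV ?U] nine by simp
    then have "card ?U = 7 \<or> card ?U = 8"
      using U False by linarith
    moreover have "coprime (7::nat) 9" and "coprime (8::nat) 9"
      by code_simp+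
    ultimately have "coprime (card ?U) CARD('a)"
      using nine by auto
    then show ?thesis
      using card_less_card_Un_translate[of ?U d] assms(5) U by simp
  qed
  also have "card ?V \<le> card (insert 0 (subsums (insert d A)))"
    using subsums_insert[of A d] assms(2,4) by (intro card_mono) (auto simp: add.commute)
  also have "\<dots> \<le> card (subsums (insert d A)) + 1"
    by (simp add: card_insert_if)
  finally show ?thesis
    by simp
qed

lemma card_subsums_ge_7_card_4:
  fixes A :: "'a::{ab_group_add,finite} set"
  assumes nine: "CARD('a) = 9" and "card A = 4" and "0 \<notin> A"
  shows "7 \<le> card (subsums A)"
  using zero_sum_free_triple_or_inverse_pairs[OF assms(2,3)]
proof (elim disjE exE bexE)
  fix d
  assume "d \<in> A" and "zero_sum_free (A - {d})"
  moreover have "d \<noteq> 0"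
    using \<open>d \<in> A\<close> assms(3) by blast
  ultimately show ?thesis
    using card_subsums_insert_ge_7[OF nine, of "A - {d}" d] assms(2) by (simp add: insert_absorb)
next
  fix x y
  assume A: "A = {x, -x, y, -y}"
  then have "x \<noteq> 0" "y \<noteq> 0" "y \<noteq> x" "y \<noteq> -x"
    using assms(2,3) by (auto simp: card_insert_if split: if_splits)
  then show ?thesis
    unfolding A by (rule card_subsums_inverse_pairs_ge_7[OF nine])
qed

theorem lemma2p5:
  fixes A B :: "'a::{ab_group_add, finite} set"
  assumes "card (UNIV :: 'a set) = 9"
  shows "(card A = 3 \<and> zero_sum_free A \<longrightarrow> card (subsums A) \<ge> 6)
    \<and> (card A = 3 \<and> 0 \<notin> A \<longrightarrow> card (subsums A) \<ge> 5)
    \<and> (card A = 4 \<and> 0 \<notin> A \<longrightarrow> card (subsums A) \<ge> 7)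
    \<and> (card A = 4 \<longrightarrow> card (subsums_r 2 A) \<ge> 5)
    \<and> (card A = 4 \<and> card B \<ge> 2 \<longrightarrow> card (sumset A B) \<ge> 5)"
proof -
  have odd: "odd CARD('a)"
    using assms by simp
  have "coprime (4::nat) 9"
    by code_simp
  then show ?thesis
    using card_subsums_ge_6_card_3_zero_sum_free[OF odd] card_subsums_ge_5_card_3[OF odd]
      card_subsums_ge_7_card_4[OF assms] card_subsums_r_2_ge_5_card_4[OF odd]
      card_less_card_sumset[of A B] assms
    by auto
qed

end
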